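(* In the closed-loop system of Controller 3 (see context), assume $\xi_i=0$ for all $i\neq k$ and $\xi_k>0$ for one index $k$. Then for every initial condition (with $\omega_i(t_0)=0$), $\phi_i-\bar\phi_i\to 0$ and $\dot\phi_i\to \xi_k/n$ as $t\to\infty$ for all $i=1,\dots,n$.
   Context: Controller 3: for $n\ge2$ robots with real-valued phases $\phi_i$ (indexed counterclockwise at the initial time), gains $k_\phi,k_\omega>0$ and nonnegative constants $\xi_i$, the phase dynamics are $\dot\omega_i=k_\omega(\bar\phi_i-\phi_i)$, $\omega_i(t_0)=0$, $\dot\phi_i=\omega_i+k_\phi(\bar\phi_i-\phi_i)+\xi_i$, where $\bar\phi_1=\frac{\phi_2+\phi_n-2\pi}{2}$, $\bar\phi_i=\frac{\phi_{i+1}+\phi_{i-1}}{2}$ for $2\le i\le n-1$, $\bar\phi_n=\frac{\phi_1+2\pi+\phi_{n-1}}{2}$. *)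

theory Defs
  imports "HOL-Analysis.Analysis"
begin

text \<open>Reference phase of robot i (indices 1..n) for Controller 3;
  phi i t is the phase of robot i at time t.\<close>
definition phibar :: "nat \<Rightarrow> (nat \<Rightarrow> real \<Rightarrow> real) \<Rightarrow> nat \<Rightarrow> real \<Rightarrow> real" where
  "phibar n phi i t =
     (if i = 1 then (phi 2 t + phi n t - 2 * pi) / 2
      else if i = n then (phi 1 t + 2 * pi + phi (n - 1) t) / 2
      else (phi (i + 1) t + phi (i - 1) t) / 2)"

end

theory Submission
  imports Defs "HOL-Real_Asymp.Real_Asymp"
begin

text \<open>Put e = phibar - phi and z = phi' - (sum of the xi) / n. Up to constant offsets that cancel
  over the ring, e = - L phi for the Laplacian L of the cycle, so the closed loop is the linear
  system e' = - L z, z' = k_omega e - k_phi L z, and the integral action keeps the sum of z at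
  zero. On zero-sum vectors L is coercive (a discrete Poincare inequality), which makes a
  quadratic energy of (e, z) with a small cross term decay exponentially; hence e and z tend
  to 0.\<close>

definition cyc_succ :: "nat \<Rightarrow> nat \<Rightarrow> nat" where
  "cyc_succ n i = (if i = n then 1 else Suc i)"

definition cyc_pred :: "nat \<Rightarrow> nat \<Rightarrow> nat" where
  "cyc_pred n i = (if i = 1 then n else i - 1)"

lemma cyc_succ_in: "i \<in> {1..n} \<Longrightarrow> cyc_succ n i \<in> {1..n}"
  by (auto simp: cyc_succ_def)

lemma cyc_pred_in: "i \<in> {1..n} \<Longrightarrow> cyc_pred n i \<in> {1..n}"
  by (auto simp: cyc_pred_def)

lemma cyc_pred_succ: "i \<in> {1..n} \<Longrightarrow> cyc_pred n (cyc_succ n i) = i"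
  by (auto simp: cyc_pred_def cyc_succ_def)

lemma bij_betw_cyc_succ: "bij_betw (cyc_succ n) {1..n} {1..n}"
  by (rule bij_betw_byWitness[where f' = "cyc_pred n"])
    (auto simp: cyc_succ_def cyc_pred_def)

lemma bij_betw_cyc_pred: "bij_betw (cyc_pred n) {1..n} {1..n}"
  by (rule bij_betw_byWitness[where f' = "cyc_succ n"])
    (auto simp: cyc_succ_def cyc_pred_def)

lemma sum_cyc_succ: "(\<Sum>i=1..n. f (cyc_succ n i)) = (\<Sum>i=1..n. f i)"
  using sum.reindex_bij_betw[OF bij_betw_cyc_succ] by simp

lemma sum_cyc_pred: "(\<Sum>i=1..n. f (cyc_pred n i)) = (\<Sum>i=1..n. f i)"
  using sum.reindex_bij_betw[OF bij_betw_cyc_pred] by simp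

definition dot :: "nat \<Rightarrow> (nat \<Rightarrow> real) \<Rightarrow> (nat \<Rightarrow> real) \<Rightarrow> real" where
  "dot n x y = (\<Sum>i=1..n. x i * y i)"

definition cyc_lap :: "nat \<Rightarrow> (nat \<Rightarrow> real) \<Rightarrow> nat \<Rightarrow> real" where
  "cyc_lap n x i = x i - (x (cyc_succ n i) + x (cyc_pred n i)) / 2"

lemma dot_commute: "dot n x y = dot n y x"
  by (simp add: dot_def mult.commute)

lemma dot_diff_left: "dot n (\<lambda>i. x i - y i) w = dot n x w - dot n y w"
  and dot_diff_right: "dot n w (\<lambda>i. x i - y i) = dot n w x - dot n w y"
  and dot_scale_left: "dot n (\<lambda>i. c * x i) w = c * dot n x w"
  and dot_scale_right: "dot n w (\<lambda>i. c * x i) = c * dot n w x"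
  and dot_minus_left: "dot n (\<lambda>i. - x i) w = - dot n x w"
  and dot_minus_right: "dot n w (\<lambda>i. - x i) = - dot n w x"
  by (simp_all add: dot_def algebra_simps sum_subtractf sum_distrib_left sum_negf)

lemma dot_self_nonneg: "dot n x x \<ge> 0"
  by (simp add: dot_def sum_nonneg)

lemma sq_le_dot_self: "i \<in> {1..n} \<Longrightarrow> (x i)\<^sup>2 \<le> dot n x x"
  unfolding dot_def power2_eq_square by (rule member_le_sum) auto

lemma dot_Cauchy_Schwarz: "(dot n x y)\<^sup>2 \<le> dot n x x * dot n y y"
  using Cauchy_Schwarz_ineq_sum[of x y "{1..n}"] by (simp add: dot_def power2_eq_square)

lemma dot_Young:
  assumes "c > 0"
  shows "2 * \<bar>dot n x y\<bar> \<le> c * dot n x x + dot n y y / c"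
proof -
  have termwise: "2 * \<bar>x i * y i\<bar> \<le> c * (x i * x i) + y i * y i / c" for i
  proof -
    have "0 \<le> (c * \<bar>x i\<bar> - \<bar>y i\<bar>)\<^sup>2 / c" using assms by simp
    then show ?thesis
      using assms by (simp add: power2_eq_square field_simps abs_mult)
  qed
  have "2 * \<bar>dot n x y\<bar> \<le> 2 * (\<Sum>i=1..n. \<bar>x i * y i\<bar>)"
    unfolding dot_def by (simp add: sum_abs)
  also have "\<dots> \<le> (\<Sum>i=1..n. c * (x i * x i) + y i * y i / c)"
    unfolding sum_distrib_left by (rule sum_mono) (rule termwise)
  finally show ?thesis
    by (simp add: dot_def sum.distrib sum_distrib_left sum_divide_distrib)
qed

lemma sum_cyc_lap: "(\<Sum>i=1..n. cyc_lap n x i) = 0"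
  using sum_cyc_succ[of x n] sum_cyc_pred[of x n]
  by (simp add: cyc_lap_def sum_subtractf sum.distrib flip: sum_divide_distrib)

lemma cyc_lap_add_const: "cyc_lap n (\<lambda>j. x j + c) i = cyc_lap n x i"
  by (simp add: cyc_lap_def field_simps)

lemma dot_cyc_succ_eq_cyc_pred: "dot n x (\<lambda>i. y (cyc_succ n i)) = dot n (\<lambda>i. x (cyc_pred n i)) y"
proof -
  have "dot n x (\<lambda>i. y (cyc_succ n i)) = (\<Sum>i=1..n. x (cyc_pred n (cyc_succ n i)) * y (cyc_succ n i))"
    unfolding dot_def by (rule sum.cong) (auto simp: cyc_pred_succ)
  also have "\<dots> = dot n (\<lambda>i. x (cyc_pred n i)) y"
    unfolding dot_def by (rule sum_cyc_succ)
  finally show ?thesis .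
qed

lemma dot_cyc_lap_sym: "dot n x (cyc_lap n y) = dot n (cyc_lap n x) y"
proof -
  have "dot n x (cyc_lap n y)
      = dot n x y - (dot n x (\<lambda>i. y (cyc_succ n i)) + dot n x (\<lambda>i. y (cyc_pred n i))) / 2"
    by (simp add: dot_def cyc_lap_def algebra_simps sum_subtractf sum.distrib
        flip: sum_divide_distrib)
  also have "\<dots> = dot n x y - (dot n (\<lambda>i. x (cyc_pred n i)) y + dot n (\<lambda>i. x (cyc_succ n i)) y) / 2"
    using dot_cyc_succ_eq_cyc_pred[of n x y] dot_cyc_succ_eq_cyc_pred[of n y x]
    by (simp add: dot_commute)
  also have "\<dots> = dot n (cyc_lap n x) y"
    by (simp add: dot_def cyc_lap_def algebra_simps sum_subtractf sum.distrib
        flip: sum_divide_distrib)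
  finally show ?thesis .
qed

lemma dot_cyc_lap_self: "dot n x (cyc_lap n x) = (\<Sum>i=1..n. (x (cyc_succ n i) - x i)\<^sup>2) / 2"
proof -
  have "2 * dot n x (cyc_lap n x) = dot n x (cyc_lap n x) + dot n (cyc_lap n x) x"
    by (simp add: dot_commute)
  also have "\<dots> = (\<Sum>i=1..n. (x (cyc_succ n i))\<^sup>2) + (\<Sum>i=1..n. (x i)\<^sup>2)
                   - 2 * dot n x (\<lambda>i. x (cyc_succ n i))"
    using dot_cyc_succ_eq_cyc_pred[of n x x] sum_cyc_succ[of "\<lambda>i. (x i)\<^sup>2" n]
    by (simp add: dot_def cyc_lap_def algebra_simps sum_subtractf sum.distrib power2_eq_square
        flip: sum_divide_distrib)
  also have "\<dots> = (\<Sum>i=1..n. (x (cyc_succ n i) - x i)\<^sup>2)"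
    by (simp add: dot_def power2_diff sum_subtractf sum.distrib sum_distrib_left algebra_simps)
  finally show ?thesis by simp
qed

lemma dot_cyc_lap_self_nonneg: "dot n x (cyc_lap n x) \<ge> 0"
  by (simp add: dot_cyc_lap_self sum_nonneg)

text \<open>Each deviation x i - x 1 is a telescoping sum of at most n edge differences, and for
  zero-mean x the squared deviations from x 1 sum to at least dot n x x.\<close>
lemma cyc_poincare:
  assumes "(\<Sum>i=1..n. x i) = 0"
  shows "dot n x x \<le> 2 * real n ^ 2 * dot n x (cyc_lap n x)"
proof -
  define T where "T = (\<Sum>i=1..n. (x (cyc_succ n i) - x i)\<^sup>2)"
  have path_le_T: "(\<Sum>m\<in>{1..<n}. (x (Suc m) - x m)\<^sup>2) \<le> T"
  proof -
    have "(\<Sum>m\<in>{1..<n}. (x (Suc m) - x m)\<^sup>2) = (\<Sum>m\<in>{1..<n}. (x (cyc_succ n m) - x m)\<^sup>2)"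
      by (rule sum.cong) (auto simp: cyc_succ_def)
    also have "\<dots> \<le> T" unfolding T_def by (rule sum_mono2) auto
    finally show ?thesis .
  qed
  have deviation: "(x i - x 1)\<^sup>2 \<le> real n * T" if i: "i \<in> {1..n}" for i
  proof -
    have "x i - x 1 = (\<Sum>m\<in>{1..<i}. x (Suc m) - x m)"
      using i by (simp add: sum_Suc_diff')
    then have "(x i - x 1)\<^sup>2 \<le> (\<Sum>m\<in>{1..<i}. (x (Suc m) - x m)\<^sup>2) * card {1..<i}"
      using sum_squared_le_sum_of_squares by metis
    also have "\<dots> \<le> (\<Sum>m\<in>{1..<n}. (x (Suc m) - x m)\<^sup>2) * real n"
      using i by (intro mult_mono sum_mono2 sum_nonneg) auto
    also have "\<dots> \<le> T * real n" using path_le_T by (simp add: mult_right_mono)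
    finally show ?thesis by (simp add: mult.commute)
  qed
  have "(\<Sum>i=1..n. (x i - x 1)\<^sup>2) = dot n x x + real n * (x 1)\<^sup>2 - 2 * x 1 * (\<Sum>i=1..n. x i)"
    by (simp add: dot_def power2_diff sum_subtractf sum.distrib sum_distrib_left algebra_simps
        power2_eq_square)
  then have "dot n x x \<le> (\<Sum>i=1..n. (x i - x 1)\<^sup>2)" using assms by simp
  also have "\<dots> \<le> (\<Sum>i=1..n. real n * T)" by (rule sum_mono) (rule deviation)
  also have "\<dots> = 2 * real n ^ 2 * dot n x (cyc_lap n x)"
    by (simp add: dot_cyc_lap_self T_def power2_eq_square)
  finally show ?thesis .
qed

lemma DERIV_dot:
  assumes "\<And>i. i \<in> {1..n} \<Longrightarrow> ((\<lambda>s. x i s) has_real_derivative x' i) (at t within S)"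
    and "\<And>i. i \<in> {1..n} \<Longrightarrow> ((\<lambda>s. y i s) has_real_derivative y' i) (at t within S)"
  shows "((\<lambda>s. dot n (\<lambda>i. x i s) (\<lambda>i. y i s)) has_real_derivative
           dot n x' (\<lambda>i. y i t) + dot n (\<lambda>i. x i t) y') (at t within S)"
proof -
  have "((\<lambda>s. \<Sum>i=1..n. x i s * y i s) has_real_derivative
          (\<Sum>i=1..n. x' i * y i t + y' i * x i t)) (at t within S)"
    by (rule DERIV_sum) (rule DERIV_mult, auto intro: assms)
  then show ?thesis by (simp add: dot_def sum.distrib mult.commute)
qed

lemma DERIV_cyc_lap:
  assumes "i \<in> {1..n}"
    and "\<And>j. j \<in> {1..n} \<Longrightarrow> ((\<lambda>s. x j s) has_real_derivative x' j) (at t within S)"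
  shows "((\<lambda>s. cyc_lap n (\<lambda>j. x j s) i) has_real_derivative cyc_lap n x' i) (at t within S)"
  unfolding cyc_lap_def
  by (intro DERIV_diff DERIV_cdivide DERIV_add assms cyc_succ_in cyc_pred_in)

lemma exp_decay_of_DERIV_le:
  fixes V V' :: "real \<Rightarrow> real"
  assumes deriv: "\<And>t. t > t1 \<Longrightarrow> (V has_real_derivative V' t) (at t)"
    and decay: "\<And>t. t > t1 \<Longrightarrow> V' t \<le> - \<delta> * V t"
    and "t1 < s" "s \<le> t"
  shows "V t \<le> V s * exp (- \<delta> * (t - s))"
proof -
  define g where "g t = V t * exp (\<delta> * t)" for t
  have g_deriv: "(g has_real_derivative (V' t + \<delta> * V t) * exp (\<delta> * t)) (at t)" if "t > t1" for t
    unfolding g_def using deriv[OF that]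
    by (auto intro!: derivative_eq_intros simp: algebra_simps)
  have "g t \<le> g s"
  proof (rule DERIV_nonpos_imp_decreasing_open[OF \<open>s \<le> t\<close>])
    fix r assume "s < r" "r < t"
    then show "\<exists>y. (g has_real_derivative y) (at r) \<and> y \<le> 0"
      using g_deriv[of r] decay[of r] \<open>t1 < s\<close> by (intro exI conjI) (auto intro: mult_nonpos_nonneg)
  next
    show "continuous_on {s..t} g"
    proof (rule DERIV_atLeastAtMost_imp_continuous_on)
      fix r assume "s \<le> r" "r \<le> t"
      then show "\<exists>y. (g has_real_derivative y) (at r)"
        using g_deriv[of r] \<open>t1 < s\<close> by auto
    qed
  qed
  then have "g t * exp (- \<delta> * t) \<le> g s * exp (- \<delta> * t)" by simp
  then show ?thesis by (simp add: g_def mult.assoc algebra_simps flip: exp_add)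
qed

lemma tendsto_zero_of_DERIV_le:
  fixes V V' :: "real \<Rightarrow> real"
  assumes "\<delta> > 0"
    and "\<And>t. t > t1 \<Longrightarrow> (V has_real_derivative V' t) (at t)"
    and "\<And>t. t > t1 \<Longrightarrow> V' t \<le> - \<delta> * V t"
    and nonneg: "\<And>t. t > t1 \<Longrightarrow> V t \<ge> 0"
  shows "(V \<longlongrightarrow> 0) at_top"
proof (rule tendsto_sandwich)
  define s where "s = t1 + 1"
  show "\<forall>\<^sub>F t in at_top. 0 \<le> V t"
    using nonneg by (intro eventually_at_top_linorderI[of s]) (auto simp: s_def)
  show "\<forall>\<^sub>F t in at_top. V t \<le> V s * exp (- \<delta> * (t - s))"
    using exp_decay_of_DERIV_le[OF assms(2,3)]
    by (intro eventually_at_top_linorderI[of s]) (auto simp: s_def)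
  show "((\<lambda>t. V s * exp (- \<delta> * (t - s))) \<longlongrightarrow> 0) at_top"
    using \<open>\<delta> > 0\<close> by real_asymp
qed simp

lemma tendsto_zero_of_square_le:
  fixes f g :: "real \<Rightarrow> real"
  assumes "\<forall>\<^sub>F t in at_top. (f t)\<^sup>2 \<le> c * g t" and "(g \<longlongrightarrow> 0) at_top"
  shows "(f \<longlongrightarrow> 0) at_top"
proof -
  have "((\<lambda>t. c * g t) \<longlongrightarrow> c * 0) at_top" by (intro tendsto_mult tendsto_const assms(2))
  then have "((\<lambda>t. (f t)\<^sup>2) \<longlongrightarrow> 0) at_top"
    by (intro tendsto_sandwich[OF _ assms(1) tendsto_const]) auto
  then have "((\<lambda>t. sqrt ((f t)\<^sup>2)) \<longlongrightarrow> sqrt 0) at_top" by (rule tendsto_real_sqrt)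
  then show ?thesis by (simp add: tendsto_rabs_zero_iff)
qed

locale cycle_pi_gains =
  fixes n :: nat and a b :: real
  assumes n_pos: "n > 0" and a_pos: "a > 0" and b_pos: "b > 0"
begin

definition \<mu> :: real where "\<mu> = 1 / (2 * real n ^ 2)"

definition \<epsilon> :: real where "\<epsilon> = min 1 (min (a / b) (min (b * \<mu> / 4) (a * \<mu> / 4)))"

definition \<delta> :: real where "\<delta> = 2 / 3 * min (b * \<mu> / 2) \<epsilon>"

text \<open>Along the flow x' = - L y, y' = a x - b L y the quantity a |x|^2 + <y, L y> only loses
  2 b |L y|^2; the small cross term - 2 \<epsilon> <x, y> turns this into strict exponential decay.\<close>
definition energy :: "(nat \<Rightarrow> real) \<Rightarrow> (nat \<Rightarrow> real) \<Rightarrow> real" where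
  "energy x y = a * dot n x x + dot n y (cyc_lap n y) - 2 * \<epsilon> * dot n x y"

definition energy_rate :: "(nat \<Rightarrow> real) \<Rightarrow> (nat \<Rightarrow> real) \<Rightarrow> real" where
  "energy_rate x y =
     - 2 * b * dot n (cyc_lap n y) (cyc_lap n y) + 2 * \<epsilon> * dot n y (cyc_lap n y)
     - 2 * \<epsilon> * a * dot n x x + 2 * \<epsilon> * b * dot n x (cyc_lap n y)"

lemma \<mu>_pos: "\<mu> > 0"
  using n_pos by (simp add: \<mu>_def)

lemma \<epsilon>_pos: "\<epsilon> > 0"
  using a_pos b_pos \<mu>_pos by (simp add: \<epsilon>_def)

lemma \<epsilon>_le: "\<epsilon> \<le> 1" "\<epsilon> \<le> a / b" "\<epsilon> \<le> b * \<mu> / 4" "\<epsilon> \<le> a * \<mu> / 4"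
  unfolding \<epsilon>_def by (meson min.cobounded1 min.cobounded2 order_trans)+

lemma \<delta>_pos: "\<delta> > 0"
  using b_pos \<mu>_pos \<epsilon>_pos by (simp add: \<delta>_def)

lemma poincare_\<mu>:
  assumes "(\<Sum>i=1..n. y i) = 0"
  shows "\<mu> * dot n y y \<le> dot n y (cyc_lap n y)"
  using cyc_poincare[OF assms] n_pos by (simp add: \<mu>_def field_simps)

lemma poincare_\<mu>_cyc_lap:
  assumes "(\<Sum>i=1..n. y i) = 0"
  shows "\<mu> * dot n y (cyc_lap n y) \<le> dot n (cyc_lap n y) (cyc_lap n y)"
proof -
  define Q where "Q = dot n y (cyc_lap n y)"
  have "Q\<^sup>2 \<le> dot n y y * dot n (cyc_lap n y) (cyc_lap n y)"
    unfolding Q_def by (rule dot_Cauchy_Schwarz)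
  also have "\<dots> \<le> Q / \<mu> * dot n (cyc_lap n y) (cyc_lap n y)"
    using poincare_\<mu>[OF assms] \<mu>_pos
    by (intro mult_right_mono dot_self_nonneg) (simp add: Q_def field_simps)
  finally have "\<mu> * Q * Q \<le> Q * dot n (cyc_lap n y) (cyc_lap n y)"
    using \<mu>_pos by (simp add: power2_eq_square field_simps)
  moreover have "Q \<ge> 0" unfolding Q_def by (rule dot_cyc_lap_self_nonneg)
  ultimately show ?thesis
    using dot_self_nonneg[of n "cyc_lap n y"]
    by (cases "Q = 0") (simp_all add: Q_def mult.commute mult.left_commute)
qed

lemma cross_term_bound:
  assumes "(\<Sum>i=1..n. y i) = 0"
  shows "2 * \<epsilon> * \<bar>dot n x y\<bar> \<le> (a * dot n x x + dot n y (cyc_lap n y)) / 2"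
proof -
  have "2 * \<bar>dot n x y\<bar> \<le> a / (2 * \<epsilon>) * dot n x x + dot n y y / (a / (2 * \<epsilon>))"
    using a_pos \<epsilon>_pos by (intro dot_Young) simp
  then have "2 * \<epsilon> * \<bar>dot n x y\<bar> \<le> a / 2 * dot n x x + 2 * \<epsilon>\<^sup>2 / a * dot n y y"
    using a_pos \<epsilon>_pos by (simp add: field_simps power2_eq_square)
  moreover have "\<epsilon> * \<epsilon> \<le> \<epsilon> * 1"
    using \<epsilon>_le(1) \<epsilon>_pos by (intro mult_left_mono) auto
  then have "\<epsilon>\<^sup>2 \<le> a * \<mu> / 4"
    using \<epsilon>_le(4) by (simp add: power2_eq_square)
  then have "2 * \<epsilon>\<^sup>2 / a * dot n y y \<le> \<mu> / 2 * dot n y y"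
    using a_pos by (intro mult_right_mono dot_self_nonneg) (simp add: field_simps)
  moreover note poincare_\<mu>[OF assms]
  ultimately show ?thesis by simp
qed

lemma energy_lower:
  assumes "(\<Sum>i=1..n. y i) = 0"
  shows "a * dot n x x + dot n y (cyc_lap n y) \<le> 2 * energy x y"
proof -
  have "\<bar>2 * \<epsilon> * dot n x y\<bar> = 2 * \<epsilon> * \<bar>dot n x y\<bar>"
    using \<epsilon>_pos by (simp add: abs_mult)
  then show ?thesis
    using cross_term_bound[OF assms, of x] abs_ge_minus_self[of "2 * \<epsilon> * dot n x y"]
    by (simp add: energy_def)
qed

lemma energy_upper:
  assumes "(\<Sum>i=1..n. y i) = 0"
  shows "2 * energy x y \<le> 3 * (a * dot n x x + dot n y (cyc_lap n y))"
proof -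
  have "\<bar>2 * \<epsilon> * dot n x y\<bar> = 2 * \<epsilon> * \<bar>dot n x y\<bar>"
    using \<epsilon>_pos by (simp add: abs_mult)
  then show ?thesis
    using cross_term_bound[OF assms, of x] abs_ge_self[of "2 * \<epsilon> * dot n x y"]
    by (simp add: energy_def)
qed

lemma energy_rate_le:
  assumes "(\<Sum>i=1..n. y i) = 0"
  shows "energy_rate x y \<le> - \<delta> * energy x y"
proof -
  define P Q X Y where "P = dot n x x" and "Q = dot n y (cyc_lap n y)"
    and "X = dot n x (cyc_lap n y)" and "Y = dot n (cyc_lap n y) (cyc_lap n y)"
  define \<gamma> where "\<gamma> = min (b * \<mu> / 2) \<epsilon>"
  have "2 * X \<le> a / b * P + b / a * Y"
    using dot_Young[of "a / b" n x "cyc_lap n y"] abs_ge_self[of X] a_pos b_pos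
    by (simp add: X_def P_def Y_def mult.commute)
  then have "\<epsilon> * b * (2 * X) \<le> \<epsilon> * b * (a / b * P + b / a * Y)"
    using \<epsilon>_pos b_pos by (intro mult_left_mono) auto
  also have "\<dots> = \<epsilon> * a * P + \<epsilon> * (b\<^sup>2 / a) * Y"
    using a_pos b_pos by (simp add: field_simps power2_eq_square)
  finally have "2 * \<epsilon> * b * X \<le> \<epsilon> * a * P + \<epsilon> * (b\<^sup>2 / a) * Y"
    by (simp add: mult_ac)
  moreover have "\<epsilon> * (b\<^sup>2 / a) * Y \<le> b * Y"
  proof -
    have "\<epsilon> * (b\<^sup>2 / a) \<le> a / b * (b\<^sup>2 / a)"
      using \<epsilon>_le(2) a_pos by (intro mult_right_mono) auto
    then show ?thesis
      using a_pos b_pos by (intro mult_right_mono) (auto simp: Y_def dot_self_nonneg power2_eq_square)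
  qed
  moreover have "b * (\<mu> * Q) \<le> b * Y"
    using poincare_\<mu>_cyc_lap[OF assms] b_pos by (simp add: Q_def Y_def)
  moreover have "Q \<ge> 0" "P \<ge> 0"
    by (simp_all add: Q_def P_def dot_cyc_lap_self_nonneg dot_self_nonneg)
  then have "2 * \<epsilon> * Q \<le> b * \<mu> / 2 * Q" "\<gamma> * Q \<le> b * \<mu> / 2 * Q"
    "\<gamma> * (a * P) \<le> \<epsilon> * (a * P)"
    using \<epsilon>_le(3) a_pos
    by (intro mult_right_mono; simp add: \<gamma>_def)+
  moreover have "\<gamma> / 3 * (2 * energy x y) \<le> \<gamma> / 3 * (3 * (a * P + Q))"
    using energy_upper[OF assms, of x] \<delta>_pos
    by (intro mult_left_mono) (simp_all add: \<delta>_def \<gamma>_def P_def Q_def)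
  then have "\<delta> * energy x y \<le> \<gamma> * (a * P + Q)"
    by (simp add: \<delta>_def \<gamma>_def algebra_simps)
  ultimately show ?thesis
    by (simp add: energy_rate_def P_def Q_def X_def Y_def algebra_simps)
qed

end

locale cycle_pi_flow = cycle_pi_gains +
  fixes t1 :: real and x y :: "nat \<Rightarrow> real \<Rightarrow> real"
  assumes x_deriv: "\<And>i t. i \<in> {1..n} \<Longrightarrow> t > t1 \<Longrightarrow>
      (x i has_real_derivative - cyc_lap n (\<lambda>j. y j t) i) (at t)"
    and y_deriv: "\<And>i t. i \<in> {1..n} \<Longrightarrow> t > t1 \<Longrightarrow>
      (y i has_real_derivative a * x i t - b * cyc_lap n (\<lambda>j. y j t) i) (at t)"
    and y_sum_zero: "\<And>t. t > t1 \<Longrightarrow> (\<Sum>i=1..n. y i t) = 0"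
begin

lemma energy_deriv:
  assumes t: "t > t1"
  shows "((\<lambda>s. energy (\<lambda>i. x i s) (\<lambda>i. y i s)) has_real_derivative
           energy_rate (\<lambda>i. x i t) (\<lambda>i. y i t)) (at t)"
proof -
  define X Y where "X = (\<lambda>i. x i t)" and "Y = (\<lambda>i. y i t)"
  define X' Y' where "X' = (\<lambda>i. - cyc_lap n Y i)" and "Y' = (\<lambda>i. a * X i - b * cyc_lap n Y i)"
  have dx: "((\<lambda>s. x i s) has_real_derivative X' i) (at t)" if "i \<in> {1..n}" for i
    using x_deriv[OF that t] by (simp add: X'_def Y_def)
  have dy: "((\<lambda>s. y i s) has_real_derivative Y' i) (at t)" if "i \<in> {1..n}" for i
    using y_deriv[OF that t] by (simp add: X_def Y'_def Y_def)
  have dLy: "((\<lambda>s. cyc_lap n (\<lambda>j. y j s) i) has_real_derivative cyc_lap n Y' i) (at t)"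
    if "i \<in> {1..n}" for i
    using that dy by (rule DERIV_cyc_lap)
  have "((\<lambda>s. energy (\<lambda>i. x i s) (\<lambda>i. y i s)) has_real_derivative
      a * (dot n X' X + dot n X X') + (dot n Y' (cyc_lap n Y) + dot n Y (cyc_lap n Y'))
      - 2 * \<epsilon> * (dot n X' Y + dot n X Y')) (at t)"
    unfolding energy_def X_def Y_def
    using DERIV_dot[of n x X' t UNIV x X', OF dx dx]
      DERIV_dot[of n y Y' t UNIV "\<lambda>i s. cyc_lap n (\<lambda>j. y j s) i" "cyc_lap n Y'", OF dy dLy]
      DERIV_dot[of n x X' t UNIV y Y', OF dx dy]
    by (intro DERIV_diff DERIV_add DERIV_cmult) (simp_all add: X_def Y_def)
  moreover have "dot n Y (cyc_lap n Y') = dot n (cyc_lap n Y) Y'"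
    by (rule dot_cyc_lap_sym)
  also have "\<dots> = a * dot n X (cyc_lap n Y) - b * dot n (cyc_lap n Y) (cyc_lap n Y)"
    unfolding Y'_def dot_diff_right dot_scale_right by (simp add: dot_commute)
  ultimately show ?thesis
    by (simp add: energy_rate_def X'_def Y'_def X_def Y_def dot_minus_left dot_minus_right
        dot_diff_left dot_scale_left dot_diff_right dot_scale_right dot_commute algebra_simps)
qed

theorem tendsto_zero:
  assumes "i \<in> {1..n}"
  shows "(x i \<longlongrightarrow> 0) at_top \<and> (y i \<longlongrightarrow> 0) at_top"
proof -
  define V where "V t = energy (\<lambda>j. x j t) (\<lambda>j. y j t)" for t
  have V_bound:
    "a * dot n (\<lambda>j. x j t) (\<lambda>j. x j t) + dot n (\<lambda>j. y j t) (cyc_lap n (\<lambda>j. y j t)) \<le> 2 * V t"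
    if "t > t1" for t
    unfolding V_def by (rule energy_lower[OF y_sum_zero[OF that]])
  have "(V \<longlongrightarrow> 0) at_top"
  proof (rule tendsto_zero_of_DERIV_le[OF \<delta>_pos])
    fix t assume t: "t > t1"
    show "(V has_real_derivative energy_rate (\<lambda>j. x j t) (\<lambda>j. y j t)) (at t)"
      unfolding V_def[abs_def] by (rule energy_deriv[OF t])
    show "energy_rate (\<lambda>j. x j t) (\<lambda>j. y j t) \<le> - \<delta> * V t"
      unfolding V_def by (rule energy_rate_le[OF y_sum_zero[OF t]])
    show "V t \<ge> 0"
      using V_bound[OF t] mult_nonneg_nonneg[OF less_imp_le[OF a_pos] dot_self_nonneg[of n "\<lambda>j. x j t"]]
        dot_cyc_lap_self_nonneg[of n "\<lambda>j. y j t"]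
      by linarith
  qed
  moreover have "\<forall>\<^sub>F t in at_top. (x i t)\<^sup>2 \<le> 2 / a * V t"
  proof (rule eventually_at_top_linorderI[of "t1 + 1"])
    fix t assume "t \<ge> t1 + 1"
    moreover have "a * (x i t)\<^sup>2 \<le> a * dot n (\<lambda>j. x j t) (\<lambda>j. x j t)"
      using sq_le_dot_self[OF assms, of "\<lambda>j. x j t"] a_pos by simp
    ultimately have "a * (x i t)\<^sup>2 \<le> 2 * V t"
      using V_bound[of t] dot_cyc_lap_self_nonneg[of n "\<lambda>j. y j t"] by simp
    then show "(x i t)\<^sup>2 \<le> 2 / a * V t" using a_pos by (simp add: field_simps)
  qed
  moreover have "\<forall>\<^sub>F t in at_top. (y i t)\<^sup>2 \<le> 2 / \<mu> * V t"
  proof (rule eventually_at_top_linorderI[of "t1 + 1"])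
    fix t assume "t \<ge> t1 + 1"
    moreover have "\<mu> * (y i t)\<^sup>2 \<le> \<mu> * dot n (\<lambda>j. y j t) (\<lambda>j. y j t)"
      using sq_le_dot_self[OF assms, of "\<lambda>j. y j t"] \<mu>_pos by simp
    ultimately have "\<mu> * (y i t)\<^sup>2 \<le> 2 * V t"
      using V_bound[of t] poincare_\<mu>[OF y_sum_zero, of t]
        mult_nonneg_nonneg[OF less_imp_le[OF a_pos] dot_self_nonneg[of n "\<lambda>j. x j t"]]
      by (smt (verit))
    then show "(y i t)\<^sup>2 \<le> 2 / \<mu> * V t" using \<mu>_pos by (simp add: field_simps)
  qed
  ultimately show ?thesis by (metis tendsto_zero_of_square_le)
qed

end

definition phase_offset :: "nat \<Rightarrow> nat \<Rightarrow> real" where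
  "phase_offset n i = (if i = 1 then - pi else 0) + (if i = n then pi else 0)"

text \<open>The 2 pi shifts in phibar, which close the ring around the circle, only add a constant
  offset to the phase error, and these offsets cancel over the ring.\<close>
lemma phibar_minus_eq_cyc_lap:
  assumes "n \<ge> 2" "i \<in> {1..n}"
  shows "phibar n phi i t - phi i t = phase_offset n i - cyc_lap n (\<lambda>j. phi j t) i"
  using assms
  by (auto simp: phibar_def phase_offset_def cyc_lap_def cyc_succ_def cyc_pred_def field_simps
      eval_nat_numeral)

lemma sum_phase_offset: "n \<ge> 1 \<Longrightarrow> (\<Sum>i=1..n. phase_offset n i) = 0"
  by (simp add: phase_offset_def sum.distrib)

lemma sum_const_of_DERIV_sum_zero:
  fixes f f' :: "'i \<Rightarrow> real \<Rightarrow> real"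
  assumes "finite I"
    and "\<And>i t. i \<in> I \<Longrightarrow> t \<ge> t0 \<Longrightarrow> (f i has_real_derivative f' i t) (at t within {t0..})"
    and "\<And>t. t \<ge> t0 \<Longrightarrow> (\<Sum>i\<in>I. f' i t) = 0"
    and "t \<ge> t0"
  shows "(\<Sum>i\<in>I. f i t) = (\<Sum>i\<in>I. f i t0)"
proof -
  have "\<exists>c. \<forall>t\<in>{t0..}. (\<Sum>i\<in>I. f i t) = c"
  proof (rule has_field_derivative_zero_constant)
    fix t :: real assume "t \<in> {t0..}"
    then have "((\<lambda>s. \<Sum>i\<in>I. f i s) has_real_derivative (\<Sum>i\<in>I. f' i t)) (at t within {t0..})"
      using assms(2) by (intro DERIV_sum) auto
    then show "((\<lambda>s. \<Sum>i\<in>I. f i s) has_real_derivative 0) (at t within {t0..})"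
      using assms(3) \<open>t \<in> {t0..}\<close> by simp
  qed simp
  then show ?thesis using assms(4) by auto
qed

lemma at_within_Ici_interior: "t0 < t \<Longrightarrow> at t within {t0..} = at (t::real)"
  by (rule at_within_interior) (simp add: interior_Ici[of "t0 - 1"])

locale controller3 =
  fixes n :: nat and k_phi k_omega t0 :: real and xi :: "nat \<Rightarrow> real"
    and phi omega :: "nat \<Rightarrow> real \<Rightarrow> real"
  assumes n_ge_2: "n \<ge> 2" and k_phi_pos: "k_phi > 0" and k_omega_pos: "k_omega > 0"
    and omega_init: "\<And>i. i \<in> {1..n} \<Longrightarrow> omega i t0 = 0"
    and omega_ode: "\<And>i t. i \<in> {1..n} \<Longrightarrow> t \<ge> t0 \<Longrightarrow>
        (omega i has_real_derivative k_omega * (phibar n phi i t - phi i t)) (at t within {t0..})"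
    and phi_ode: "\<And>i t. i \<in> {1..n} \<Longrightarrow> t \<ge> t0 \<Longrightarrow>
        (phi i has_real_derivative
           omega i t + k_phi * (phibar n phi i t - phi i t) + xi i) (at t within {t0..})"
begin

definition phase_error :: "nat \<Rightarrow> real \<Rightarrow> real" where
  "phase_error i t = phibar n phi i t - phi i t"

definition mean_drift :: real where
  "mean_drift = (\<Sum>i=1..n. xi i) / real n"

text \<open>By phi_ode this is the deviation of the speed of robot i from the mean drift.\<close>
definition speed_error :: "nat \<Rightarrow> real \<Rightarrow> real" where
  "speed_error i t = omega i t + k_phi * phase_error i t + xi i - mean_drift"

lemma phase_error_eq: "i \<in> {1..n} \<Longrightarrow> phase_error i t = phase_offset n i - cyc_lap n (\<lambda>j. phi j t) i"
  unfolding phase_error_def using n_ge_2 by (rule phibar_minus_eq_cyc_lap)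

lemma sum_phase_error: "(\<Sum>i=1..n. phase_error i t) = 0"
  using sum_cyc_lap[of n "\<lambda>j. phi j t"] sum_phase_offset[of n] n_ge_2
  by (simp add: phase_error_eq sum_subtractf)

lemma sum_omega:
  assumes "t \<ge> t0"
  shows "(\<Sum>i=1..n. omega i t) = 0"
proof -
  have "(\<Sum>i=1..n. omega i t) = (\<Sum>i=1..n. omega i t0)"
  proof (rule sum_const_of_DERIV_sum_zero[where f' = "\<lambda>i t. k_omega * phase_error i t"])
    show "(\<Sum>i=1..n. k_omega * phase_error i s) = 0" for s
      using sum_phase_error[of s] by (simp flip: sum_distrib_left)
  qed (use assms omega_ode in \<open>simp_all add: phase_error_def\<close>)
  then show ?thesis using omega_init by simp
qed

lemma sum_speed_error: "t \<ge> t0 \<Longrightarrow> (\<Sum>i=1..n. speed_error i t) = 0"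
  using n_ge_2 sum_omega[of t] sum_phase_error[of t]
  by (simp add: speed_error_def sum.distrib sum_subtractf mean_drift_def flip: sum_distrib_left)

lemma phi_deriv:
  "i \<in> {1..n} \<Longrightarrow> t > t0 \<Longrightarrow> (phi i has_real_derivative speed_error i t + mean_drift) (at t)"
  using phi_ode[of i t] by (simp add: at_within_Ici_interior speed_error_def phase_error_def)

lemma phase_error_deriv:
  assumes "i \<in> {1..n}" "t > t0"
  shows "(phase_error i has_real_derivative - cyc_lap n (\<lambda>j. speed_error j t) i) (at t)"
proof -
  have "((\<lambda>s. phase_offset n i - cyc_lap n (\<lambda>j. phi j s) i) has_real_derivative
          0 - cyc_lap n (\<lambda>j. speed_error j t + mean_drift) i) (at t)"
    using assms by (intro DERIV_diff DERIV_const DERIV_cyc_lap phi_deriv)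
  moreover have "phase_error i = (\<lambda>s. phase_offset n i - cyc_lap n (\<lambda>j. phi j s) i)"
    using phase_error_eq[OF assms(1)] by (rule ext)
  ultimately show ?thesis by (simp add: cyc_lap_add_const)
qed

lemma speed_error_deriv:
  assumes "i \<in> {1..n}" "t > t0"
  shows "(speed_error i has_real_derivative
           k_omega * phase_error i t - k_phi * cyc_lap n (\<lambda>j. speed_error j t) i) (at t)"
proof -
  have "((\<lambda>s. omega i s + k_phi * phase_error i s + xi i - mean_drift) has_real_derivative
          k_omega * phase_error i t + k_phi * - cyc_lap n (\<lambda>j. speed_error j t) i + 0 - 0) (at t)"
    using omega_ode[of i t] assms
    by (intro DERIV_add DERIV_diff DERIV_cmult DERIV_const phase_error_deriv)
      (simp_all add: at_within_Ici_interior phase_error_def)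
  then show ?thesis by (simp add: speed_error_def[abs_def])
qed

theorem phase_locking:
  assumes "i \<in> {1..n}"
  shows "((\<lambda>t. phi i t - phibar n phi i t) \<longlongrightarrow> 0) at_top \<and>
         ((\<lambda>t. deriv (phi i) t) \<longlongrightarrow> mean_drift) at_top"
proof -
  interpret cycle_pi_flow n k_omega k_phi t0 phase_error speed_error
    using n_ge_2 k_omega_pos k_phi_pos phase_error_deriv speed_error_deriv sum_speed_error
    by unfold_locales auto
  have "((\<lambda>t. - phase_error i t) \<longlongrightarrow> - 0) at_top"
    using tendsto_zero[OF assms] by (intro tendsto_minus) auto
  moreover have "((\<lambda>t. speed_error i t + mean_drift) \<longlongrightarrow> 0 + mean_drift) at_top"
    using tendsto_zero[OF assms] by (intro tendsto_add) auto
  moreover have "\<forall>\<^sub>F t in at_top. speed_error i t + mean_drift = deriv (phi i) t"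
    by (intro eventually_at_top_linorderI[of "t0 + 1"] DERIV_imp_deriv[symmetric] phi_deriv[OF assms])
      simp
  ultimately show ?thesis
    by (auto simp: phase_error_def dest: tendsto_cong[THEN iffD1])
qed

end

theorem corollary1:
  fixes n k :: nat and k_phi k_omega t0 :: real
    and xi :: "nat \<Rightarrow> real"
    and phi omega :: "nat \<Rightarrow> real \<Rightarrow> real"
  assumes n: "n \<ge> 2"
    and gains: "k_phi > 0" "k_omega > 0"
    and k: "k \<in> {1..n}" "xi k > 0"
    and xi_zero: "\<And>i. i \<in> {1..n} \<Longrightarrow> i \<noteq> k \<Longrightarrow> xi i = 0"
    and omega_init: "\<And>i. i \<in> {1..n} \<Longrightarrow> omega i t0 = 0"
    and omega_ode: "\<And>i t. i \<in> {1..n} \<Longrightarrow> t \<ge> t0 \<Longrightarrow>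
        (omega i has_real_derivative k_omega * (phibar n phi i t - phi i t)) (at t within {t0..})"
    and phi_ode: "\<And>i t. i \<in> {1..n} \<Longrightarrow> t \<ge> t0 \<Longrightarrow>
        (phi i has_real_derivative
           omega i t + k_phi * (phibar n phi i t - phi i t) + xi i) (at t within {t0..})"
  shows "\<forall>i\<in>{1..n}.
           ((\<lambda>t. phi i t - phibar n phi i t) \<longlongrightarrow> 0) at_top \<and>
           ((\<lambda>t. deriv (phi i) t) \<longlongrightarrow> xi k / real n) at_top"
proof -
  interpret controller3 n k_phi k_omega t0 xi phi omega
    using n gains omega_init omega_ode phi_ode by unfold_locales
  have "(\<Sum>i=1..n. xi i) = xi k"
    using k(1) by (subst sum.remove[of _ k]) (auto intro!: sum.neutral xi_zero)
  then show ?thesis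
    using phase_locking by (simp add: mean_drift_def)
qed

end
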